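(* Let $K_\infty$ be the monoid given by the monoid presentation $\langle e,b\mid e^2=e,\ b^2=1\rangle$. For every $n\ge1$, the Zimin word $Z_n$ is an isoterm relative to $K_\infty$. That is, if $w$ is a word such that $K_\infty$ satisfies the identity $Z_n\approx w$, then $w=Z_n$ as words.
   Context: Let $x_1,x_2,\dots$ be letters. The Zimin words are defined inductively by $Z_1=x_1$ and $Z_{n+1}=Z_n\,x_{n+1}\,Z_n$. A word $v$ is an isoterm relative to a semigroup $S$ if the only word $v'$ such that $S$ satisfies the identity $v\approx v'$ is $v'=v$ itself. *)

theory Defs
  imports Main
begin

text \<open>Letters are natural numbers; a word is a list of letters.
  The Zimin word Z_n uses the letters 1..n (letter k standing for x_k).\<close>

fun zimin :: "nat \<Rightarrow> nat list" where
  "zimin 0 = []"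
| "zimin (Suc 0) = [1]"
| "zimin (Suc (Suc n)) = zimin (Suc n) @ [Suc (Suc n)] @ zimin (Suc n)"

definition satisfies_id :: "'a::monoid_mult itself \<Rightarrow> nat list \<Rightarrow> nat list \<Rightarrow> bool" where
  "satisfies_id _ u v \<longleftrightarrow>
     (\<forall>h :: nat \<Rightarrow> 'a. prod_list (map h u) = prod_list (map h v))"

definition isoterm :: "'a::monoid_mult itself \<Rightarrow> nat list \<Rightarrow> bool" where
  "isoterm M v \<longleftrightarrow> (\<forall>v'. satisfies_id M v v' \<longrightarrow> v' = v)"

datatype gen = E | B

inductive kcong :: "gen list \<Rightarrow> gen list \<Rightarrow> bool" where
  kc_E: "kcong (p @ [E, E] @ q) (p @ [E] @ q)"
| kc_B: "kcong (p @ [B, B] @ q) (p @ q)"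
| kc_refl: "kcong u u"
| kc_sym: "kcong u v \<Longrightarrow> kcong v u"
| kc_trans: "kcong u v \<Longrightarrow> kcong v w \<Longrightarrow> kcong u w"

lemma kcong_equivp: "equivp kcong"
  by (rule equivpI; auto simp: reflp_def symp_def transp_def intro: kcong.intros)

lemma kcong_context: "kcong u v \<Longrightarrow> kcong (p @ u @ q) (p @ v @ q)"
proof (induction arbitrary: p q rule: kcong.induct)
  case (kc_E p' q')
  then show ?case using kcong.kc_E[of "p @ p'" "q' @ q"] by simp
next
  case (kc_B p' q')
  then show ?case using kcong.kc_B[of "p @ p'" "q' @ q"] by simp
qed (auto intro: kcong.intros, metis kc_trans)

lemma kcong_append: "kcong a b \<Longrightarrow> kcong c d \<Longrightarrow> kcong (a @ c) (b @ d)"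
  using kcong_context[of a b "[]" c] kcong_context[of c d b "[]"]
  by (auto intro: kc_trans)

quotient_type kinf = "gen list" / kcong
  by (rule kcong_equivp)

instantiation kinf :: monoid_mult
begin

lift_definition one_kinf :: kinf is "[]" .

lift_definition times_kinf :: "kinf \<Rightarrow> kinf \<Rightarrow> kinf" is "(@)"
  by (rule kcong_append)

instance
  by standard (transfer; simp add: kc_refl)+

end

lift_definition kE :: kinf is "[E]" .
lift_definition kB :: kinf is "[B]" .

lemma "kE * kE = kE" by transfer (use kc_E[of "[]" "[]"] in simp)
lemma "kB * kB = 1" by transfer (use kc_B[of "[]" "[]"] in simp)

end

theory Submission
  imports Defs
begin

text \<open>Reducing a word over e, b by the rules ee \<rightarrow> e and bb \<rightarrow> 1 with a stack yields a word with
  no two equal adjacent letters, and the result depends only on the element of K_inf. Substituting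
  b for a letter a and e for all other letters sends Z_n to such a reduced word of length |Z_n|;
  so if Z_n \<approx> w holds, the image of w is reduced as well, i.e. the occurrences of a and of the
  other letters alternate in w. Substituting e b for a and 1 for the other letters shows that a
  occurs in w as often as in Z_n, and deleting a preserves identities. For a = x_1 these facts
  force w to be w' with x_1 interleaved, where Z_(n-1) \<approx> w' up to renaming letters, so
  induction on n gives w = Z_n.\<close>

fun push :: "gen list \<Rightarrow> gen \<Rightarrow> gen list" where
  "push (E # r) E = E # r"
| "push (B # r) B = r"
| "push r x = x # r"

text \<open>The stack holds the reduced form of the prefix read so far, last letter on top,
  so nf u is the reduced form of u reversed.\<close>

definition nf :: "gen list \<Rightarrow> gen list" where
  "nf u = foldl push [] u"

lemma distinct_adj_push: "distinct_adj r \<Longrightarrow> distinct_adj (push r x)"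
  by (induction r x rule: push.induct) (auto simp: distinct_adj_Cons)

lemma distinct_adj_foldl_push: "distinct_adj r \<Longrightarrow> distinct_adj (foldl push r u)"
  by (induction u arbitrary: r) (auto simp: distinct_adj_push)

lemma push_irreducible: "r = [] \<or> hd r \<noteq> x \<Longrightarrow> push r x = x # r"
  by (cases "(r, x)" rule: push.cases) auto

lemma push_push_E: "push (push r E) E = push r E"
  by (cases "(r, E)" rule: push.cases) auto

lemma push_push_B: "distinct_adj r \<Longrightarrow> push (push r B) B = r"
  by (cases "(r, B)" rule: push.cases) (auto simp: distinct_adj_Cons push_irreducible)

lemma nf_kcong: "kcong u v \<Longrightarrow> nf u = nf v"
proof (induction rule: kcong.induct)
  case (kc_B p q)
  have "distinct_adj (foldl push [] p)" by (rule distinct_adj_foldl_push) simp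
  then show ?case by (simp add: nf_def push_push_B)
qed (auto simp: nf_def push_push_E)

lemma foldl_push_distinct_adj: "distinct_adj (rev xs @ r) \<Longrightarrow> foldl push r xs = rev xs @ r"
proof (induction xs arbitrary: r)
  case (Cons x xs)
  then have "distinct_adj (x # r)" by (auto simp: distinct_adj_append_iff)
  then have "push r x = x # r" by (metis distinct_adj_Cons push_irreducible)
  with Cons show ?case by simp
qed simp

lemma nf_distinct_adj: "distinct_adj xs \<Longrightarrow> nf xs = rev xs"
  using foldl_push_distinct_adj[of xs "[]"] by (simp add: nf_def)

lemma length_foldl_push: "length (foldl push r xs) \<le> length r + length xs"
proof (induction xs arbitrary: r)
  case (Cons x xs)
  have "length (push r x) \<le> Suc (length r)"
    by (cases "(r, x)" rule: push.cases) auto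
  with Cons.IH[of "push r x"] show ?case by simp
qed simp

lemma not_distinct_adj_decomp: "\<not> distinct_adj xs \<Longrightarrow> \<exists>p x q. xs = p @ [x, x] @ q"
proof (induction xs rule: induct_list012)
  case (3 x y zs)
  show ?case
  proof (cases "x = y")
    case True
    then show ?thesis by (metis append_Nil append_Cons)
  next
    case False
    with 3 obtain p z q where "y # zs = p @ [z, z] @ q" by (auto simp: distinct_adj_Cons)
    then show ?thesis by (metis append_Cons)
  qed
qed auto

lemma length_nf_less: "\<not> distinct_adj xs \<Longrightarrow> length (nf xs) < length xs"
proof -
  assume "\<not> distinct_adj xs"
  then obtain p x q where xs: "xs = p @ [x, x] @ q" using not_distinct_adj_decomp by blast
  have short: "length (nf u) \<le> length u" for u
    using length_foldl_push[of "[]" u] by (simp add: nf_def)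
  show ?thesis
  proof (cases x)
    case E
    then have "nf xs = nf (p @ [E] @ q)" using xs kc_E nf_kcong by blast
    then show ?thesis using short[of "p @ [E] @ q"] xs by simp
  next
    case B
    then have "nf xs = nf (p @ q)" using xs kc_B nf_kcong by blast
    then show ?thesis using short[of "p @ q"] xs by simp
  qed
qed

lemma prod_list_abs_kinf: "prod_list (map (\<lambda>x. abs_kinf (g x)) u) = abs_kinf (concat (map g u))"
  by (induction u) (auto simp: one_kinf.abs_eq times_kinf.abs_eq)

lemma satisfies_id_kinf_nf:
  "satisfies_id TYPE(kinf) u v \<Longrightarrow> nf (concat (map g u)) = nf (concat (map g v))"
  unfolding satisfies_id_def
  by (metis prod_list_abs_kinf kinf.abs_eq_iff nf_kcong)

lemma distinct_adj_EB_power: "distinct_adj (concat (replicate k [E, B]))"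
proof (induction k)
  case (Suc k)
  then show ?case by (cases k) (auto simp: distinct_adj_Cons)
qed simp

lemma satisfies_id_kinf_count_list:
  assumes "satisfies_id TYPE(kinf) u v"
  shows "count_list u a = count_list v a"
proof -
  define g :: "nat \<Rightarrow> gen list" where "g x = (if x = a then [E, B] else [])" for x
  have image: "concat (map g xs) = concat (replicate (count_list xs a) [E, B])" for xs
    by (induction xs) (auto simp: g_def)
  have "length (nf (concat (map g xs))) = 2 * count_list xs a" for xs
    unfolding image by (simp add: nf_distinct_adj distinct_adj_EB_power length_concat sum_list_replicate)
  then show ?thesis using satisfies_id_kinf_nf[OF assms, of g] by (metis mult_left_cancel zero_neq_numeral)
qed

lemma satisfies_id_removeAll:
  assumes "satisfies_id M u v"
  shows "satisfies_id M (removeAll a u) (removeAll a v)"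
proof -
  have erase: "prod_list (map (h(a := 1)) xs) = prod_list (map h (removeAll a xs))"
    for xs and h :: "nat \<Rightarrow> 'a"
    by (induction xs) auto
  show ?thesis using assms erase unfolding satisfies_id_def by metis
qed

definition interleave :: "'a \<Rightarrow> 'a list \<Rightarrow> 'a list" where
  "interleave a ys = a # concat (map (\<lambda>y. [y, a]) ys)"

lemma interleave_Nil [simp]: "interleave a [] = [a]"
  by (simp add: interleave_def)

lemma interleave_Cons [simp]: "interleave a (y # ys) = a # y # interleave a ys"
  by (simp add: interleave_def)

lemma interleave_append: "interleave a (ys @ c # zs) = interleave a ys @ c # interleave a zs"
  by (induction ys) auto

lemma map_interleave: "map f (interleave a ys) = interleave (f a) (map f ys)"
  by (induction ys) auto

lemma removeAll_interleave: "a \<notin> set ys \<Longrightarrow> removeAll a (interleave a ys) = ys"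
  by (induction ys) auto

lemma count_list_interleave: "a \<notin> set ys \<Longrightarrow> count_list (interleave a ys) a = Suc (length ys)"
  by (induction ys) auto

lemma length_interleave: "length (interleave a ys) = Suc (2 * length ys)"
  by (induction ys) auto

lemma distinct_adj_map_interleave:
  "f a \<notin> f ` set ys \<Longrightarrow> distinct_adj (map f (interleave a ys))"
  by (induction ys) (auto simp: distinct_adj_Cons interleave_def)

lemma count_list_le_distinct_adj:
  "distinct_adj (map (\<lambda>x. x = a) xs) \<Longrightarrow>
     count_list xs a \<le> length (removeAll a xs) + (if xs \<noteq> [] \<and> hd xs = a then 1 else 0)"
  by (induction xs rule: induct_list012) (auto simp: distinct_adj_Cons)

lemma interleave_if_distinct_adj:
  "distinct_adj (map (\<lambda>x. x = a) w) \<Longrightarrow> count_list w a = Suc (length (removeAll a w))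
     \<Longrightarrow> w = interleave a (removeAll a w)"
proof (induction w rule: induct_list012)
  case (3 x y r)
  have "x = a"
    using count_list_le_distinct_adj[OF "3.prems"(1)] "3.prems"(2) by (auto split: if_splits)
  with "3.prems" have "y \<noteq> a" and "distinct_adj (map (\<lambda>x. x = a) r)"
    by (auto simp: distinct_adj_Cons)
  with "3.prems"(2) \<open>x = a\<close> have "r = interleave a (removeAll a r)"
    using "3.IH"(1) by simp
  with \<open>x = a\<close> \<open>y \<noteq> a\<close> show ?case by (metis interleave_Cons removeAll.simps(2))
qed (auto split: if_splits)

lemma kinf_identity_interleave:
  assumes a: "a \<notin> set ys"
    and sat: "satisfies_id TYPE(kinf) (interleave a ys) w"
    and removed: "removeAll a w = ys"
  shows "w = interleave a ys"
proof -
  have count: "count_list w a = Suc (length ys)"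
    using satisfies_id_kinf_count_list[OF sat] count_list_interleave[OF a] by simp
  then have length_w: "length w = Suc (2 * length ys)"
    using length_removeAll[of a w] count_le_length[of w a] removed by simp
  define \<phi> where "\<phi> x = (if x = a then B else E)" for x
  have "nf (map \<phi> w) = nf (map \<phi> (interleave a ys))"
    using satisfies_id_kinf_nf[OF sat, of "\<lambda>x. [\<phi> x]"] by (simp add: map_concat)
  also have "\<dots> = rev (map \<phi> (interleave a ys))"
    using a by (intro nf_distinct_adj distinct_adj_map_interleave) (auto simp: \<phi>_def)
  finally have "distinct_adj (map \<phi> w)"
    using length_nf_less[of "map \<phi> w"] length_w by (auto simp: length_interleave)
  moreover have "map \<phi> w = map (\<lambda>b. if b then B else E) (map (\<lambda>x. x = a) w)"
    by (simp add: \<phi>_def)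
  ultimately have "distinct_adj (map (\<lambda>x. x = a) w)"
    using distinct_adj_mapD by metis
  then have "w = interleave a (removeAll a w)"
    using count removed by (intro interleave_if_distinct_adj) simp_all
  with removed show ?thesis by simp
qed

lemma zimin_Suc: "zimin (Suc n) = interleave 1 (map Suc (zimin n))"
proof (induction n rule: zimin.induct)
  case (3 n)
  have "zimin (Suc (Suc (Suc n))) = zimin (Suc (Suc n)) @ [Suc (Suc (Suc n))] @ zimin (Suc (Suc n))"
    by (rule zimin.simps(3))
  also have "\<dots> = interleave 1 (map Suc (zimin (Suc n) @ [Suc (Suc n)] @ zimin (Suc n)))"
    unfolding "3" by (simp add: interleave_append)
  also have "\<dots> = interleave 1 (map Suc (zimin (Suc (Suc n))))"
    by (simp only: zimin.simps(3)[of n])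
  finally show ?case .
qed auto

lemma zimin_pos: "x \<in> set (zimin n) \<Longrightarrow> 0 < x"
  by (induction n rule: zimin.induct) auto

lemma isoterm_kinf_shifted_zimin: "isoterm TYPE(kinf) (map ((+) k) (zimin n))"
  unfolding isoterm_def
proof (induction n arbitrary: k)
  case 0
  show ?case
  proof (intro allI impI)
    fix w :: "nat list"
    assume "satisfies_id TYPE(kinf) (map ((+) k) (zimin 0)) w"
    then have "x \<notin> set w" for x
      using satisfies_id_kinf_count_list[of "[]" w x] by (simp add: count_list_0_iff)
    then show "w = map ((+) k) (zimin 0)" by (cases w) auto
  qed
next
  case (Suc n)
  let ?ys = "map ((+) (Suc k)) (zimin n)"
  have "(\<lambda>x. Suc (k + x)) = (+) (Suc k)" by auto
  then have zimin: "map ((+) k) (zimin (Suc n)) = interleave (Suc k) ?ys"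
    by (simp add: zimin_Suc map_interleave comp_def)
  have a: "Suc k \<notin> set ?ys" using zimin_pos by fastforce
  show ?case
  proof (intro allI impI)
    fix w
    assume "satisfies_id TYPE(kinf) (map ((+) k) (zimin (Suc n))) w"
    then have sat: "satisfies_id TYPE(kinf) (interleave (Suc k) ?ys) w" by (simp only: zimin)
    then have "satisfies_id TYPE(kinf) ?ys (removeAll (Suc k) w)"
      using satisfies_id_removeAll[OF sat, of "Suc k"] by (simp add: removeAll_interleave[OF a])
    then have "removeAll (Suc k) w = ?ys" using Suc.IH by blast
    then show "w = map ((+) k) (zimin (Suc n))"
      using kinf_identity_interleave[OF a sat] zimin by simp
  qed
qed

theorem mainTheorem4:
  fixes n :: nat and w :: "nat list"
  assumes "n \<ge> 1"
    and "satisfies_id TYPE(kinf) (zimin n) w"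
  shows "w = zimin n"
  using isoterm_kinf_shifted_zimin[of 0 n] assms(2) by (simp add: isoterm_def map_idI)

end
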